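(* Let $A$ be a $\Bbbk$-algebra which is a domain. For $k=1,\dots,m$ let $\varphi_k$ be algebra automorphisms of $A$ and $\partial_k$ locally nilpotent skew derivations of $A$ with respect to $\varphi_k$, and suppose $\partial_\ell\circ\varphi_k=q_{k\ell}\,\varphi_k\circ\partial_\ell$ for all $1\le k\le\ell\le m$, where $q_{k\ell}\in\Bbbk^\times$ and each $q_{kk}$ is not a root of unity. Then the string map $\nu=\nu_{(\partial_1,\dots,\partial_m)}:A\setminus\{0\}\to\mathbb Z_{\ge0}^m$ is a valuation (with respect to the lexicographic order) satisfying $\nu(ab)=\nu(a)+\nu(b)$ for all nonzero $a,b\in A$.
   Context: A skew derivation with respect to $\varphi$ is a linear map $\partial$ with $\partial(ab)=\partial(a)b+\varphi(a)\partial(b)$. For a locally nilpotent linear map $E$ and $x\ne0$, $\nu_E(x)$ is the largest $n\ge0$ with $E^n(x)\ne0$, and $\lambda_E(x)=E^{\nu_E(x)}(x)$ (up to a nonzero scalar). The string map is defined by $\nu_{(\partial_1,\dots,\partial_m)}(x)=(a_1,\dots,a_m)$ where $x_0=x$, $a_k=\nu_{\partial_k}(x_{k-1})$ and $x_k=\partial_k^{a_k}(x_{k-1})$. The lexicographic order on $\mathbb Z_{\ge0}^m$ compares the first coordinate first. A valuation into an ordered set $C$ means $\nu(cx)=\nu(x)$ for $c\in\Bbbk^\times$ and $\nu(x+y)\le\max(\nu(x),\nu(y))$ when $x+y\ne0$. *)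

theory Defs
  imports Main "HOL-Library.List_Lexorder"
begin

text \<open>A \<open>k\<close>-algebra structure on a ring \<open>'a\<close> is given by a central unital ring
  homomorphism \<open>\<iota> : k \<rightarrow> A\<close>; scalar multiplication is \<open>c \<cdot> x = \<iota> c * x\<close>.\<close>

definition k_algebra :: "('k::field \<Rightarrow> 'a::ring_1) \<Rightarrow> bool" where
  "k_algebra \<iota> \<longleftrightarrow> \<iota> 1 = 1 \<and> (\<forall>c d. \<iota> (c + d) = \<iota> c + \<iota> d)
     \<and> (\<forall>c d. \<iota> (c * d) = \<iota> c * \<iota> d) \<and> (\<forall>c x. \<iota> c * x = x * \<iota> c)"

definition k_linear :: "('k::field \<Rightarrow> 'a::ring_1) \<Rightarrow> ('a \<Rightarrow> 'a) \<Rightarrow> bool" where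
  "k_linear \<iota> f \<longleftrightarrow> (\<forall>x y. f (x + y) = f x + f y) \<and> (\<forall>c x. f (\<iota> c * x) = \<iota> c * f x)"

definition algebra_automorphism :: "('k::field \<Rightarrow> 'a::ring_1) \<Rightarrow> ('a \<Rightarrow> 'a) \<Rightarrow> bool" where
  "algebra_automorphism \<iota> f \<longleftrightarrow> k_linear \<iota> f \<and> bij f \<and> f 1 = 1 \<and> (\<forall>x y. f (x * y) = f x * f y)"

definition skew_derivation :: "('k::field \<Rightarrow> 'a::ring_1) \<Rightarrow> ('a \<Rightarrow> 'a) \<Rightarrow> ('a \<Rightarrow> 'a) \<Rightarrow> bool" where
  "skew_derivation \<iota> \<phi> D \<longleftrightarrow> k_linear \<iota> D \<and> (\<forall>a b. D (a * b) = D a * b + \<phi> a * D b)"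

definition locally_nilpotent :: "('a::zero \<Rightarrow> 'a) \<Rightarrow> bool" where
  "locally_nilpotent E \<longleftrightarrow> (\<forall>x. \<exists>n. (E ^^ n) x = 0)"

definition root_of_unity :: "'k::field \<Rightarrow> bool" where
  "root_of_unity q \<longleftrightarrow> (\<exists>n>0. q ^ n = 1)"

definition nu_E :: "('a::zero \<Rightarrow> 'a) \<Rightarrow> 'a \<Rightarrow> nat" where
  "nu_E E x = (GREATEST n. (E ^^ n) x \<noteq> 0)"

fun string_map :: "('a::zero \<Rightarrow> 'a) list \<Rightarrow> 'a \<Rightarrow> nat list" where
  "string_map [] x = []"
| "string_map (E # Es) x = nu_E E x # string_map Es ((E ^^ nu_E E x) x)"

definition vec_add :: "nat list \<Rightarrow> nat list \<Rightarrow> nat list" where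
  "vec_add u v = map2 (+) u v"

end

theory Submission
  imports Defs
begin

(* For the valuation property, look at the first operator \<partial>: the exponent \<nu>_\<partial> of a sum is
   at most the larger of the two exponents, and if they differ the sum inherits the leading term
   \<partial>^\<nu>(x) of the dominant summand; if they agree and do not drop, the leading term of x + y is
   the sum of the leading terms and the remaining coordinates are compared recursively.

   For multiplicativity, the q-Leibniz rule
     \<partial>^n(ab) = \<Sum>_j [n, j]_q \<phi>^j(\<partial>^(n-j) a) \<partial>^j b
   shows for r = \<nu>_\<partial>(a), s = \<nu>_\<partial>(b) that \<partial>^(r+s+1)(ab) = 0 while only the term j = s survives in
   \<partial>^(r+s)(ab). The Gaussian binomial [r+s, s]_q is nonzero since q is not a root of unity, so in
   the domain A the leading term of ab is c \<phi>^s(\<partial>^r a) \<cdot> \<partial>^s b with c \<noteq> 0. The later operators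
   \<partial>_l q-commute with \<phi>_k, so the twist y \<mapsto> c \<phi>_k^s(y) does not change their strings, and
   induction over the list of operators finishes. *)

lemma funpow_fixes_zero:
  fixes E :: "'a::zero \<Rightarrow> 'a"
  assumes "E 0 = 0"
  shows "(E ^^ n) 0 = 0"
  using assms by (induction n) auto

lemma funpow_eq_zero_iff_if_inj:
  fixes f :: "'a::zero \<Rightarrow> 'a"
  assumes "inj f" and "f 0 = 0"
  shows "(f ^^ n) x = 0 \<longleftrightarrow> x = 0"
  using inj_eq[OF inj_fn[OF assms(1), of n]] funpow_fixes_zero[of f, OF assms(2)] by metis

lemma funpow_eq_zero_mono:
  fixes E :: "'a::zero \<Rightarrow> 'a"
  assumes "E 0 = 0" and "(E ^^ n) x = 0" and "n \<le> k"
  shows "(E ^^ k) x = 0"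
proof -
  have "(E ^^ k) x = (E ^^ (k - n)) ((E ^^ n) x)"
    using \<open>n \<le> k\<close> by (metis comp_apply funpow_add le_add_diff_inverse2)
  with assms show ?thesis by (simp add: funpow_fixes_zero)
qed

lemma nu_E_eqI:
  fixes E :: "'a::zero \<Rightarrow> 'a"
  assumes "E 0 = 0" and "(E ^^ n) x \<noteq> 0" and "(E ^^ Suc n) x = 0"
  shows "nu_E E x = n"
  unfolding nu_E_def
proof (rule Greatest_equality)
  show "y \<le> n" if "(E ^^ y) x \<noteq> 0" for y
    using that funpow_eq_zero_mono[OF assms(1,3), of y] by (meson not_less_eq_eq)
qed fact

context
  fixes E :: "'a::zero \<Rightarrow> 'a"
  assumes E0: "E 0 = 0" and nilpotent: "locally_nilpotent E"
begin

lemma funpow_neq_zero_bounded: "\<exists>N. \<forall>n. (E ^^ n) x \<noteq> 0 \<longrightarrow> n \<le> N"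
proof -
  obtain N where "(E ^^ N) x = 0"
    using nilpotent unfolding locally_nilpotent_def by blast
  then show ?thesis
    using funpow_eq_zero_mono[of E, OF E0] by (meson nat_le_linear)
qed

lemma funpow_nu_E_neq_zero: "x \<noteq> 0 \<Longrightarrow> (E ^^ nu_E E x) x \<noteq> 0"
  unfolding nu_E_def
  using funpow_neq_zero_bounded[of x] GreatestI_ex_nat[of "\<lambda>n. (E ^^ n) x \<noteq> 0"]
  by (metis funpow_0)

lemma funpow_eq_zero_if_nu_E_less: "nu_E E x < n \<Longrightarrow> (E ^^ n) x = 0"
  unfolding nu_E_def
  using funpow_neq_zero_bounded[of x] Greatest_le_nat[of "\<lambda>n. (E ^^ n) x \<noteq> 0" n]
  by (meson not_le)

lemma nu_E_le_if_funpow_eq_zero: "x \<noteq> 0 \<Longrightarrow> (E ^^ Suc n) x = 0 \<Longrightarrow> nu_E E x \<le> n"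
  using funpow_nu_E_neq_zero funpow_eq_zero_mono[of E, OF E0] by (meson not_less_eq_eq)

end

lemma additive_zero:
  fixes E :: "'a::ab_group_add \<Rightarrow> 'a"
  assumes "\<forall>x y. E (x + y) = E x + E y"
  shows "E 0 = 0"
  using assms by (metis add_cancel_right_right)

lemma funpow_additive:
  fixes E :: "'a::ab_group_add \<Rightarrow> 'a"
  assumes "\<forall>x y. E (x + y) = E x + E y"
  shows "(E ^^ n) (x + y) = (E ^^ n) x + (E ^^ n) y"
  by (induction n) (simp_all add: assms)

context
  fixes E :: "'a::ab_group_add \<Rightarrow> 'a"
  assumes additive: "\<forall>x y. E (x + y) = E x + E y" and nilpotent: "locally_nilpotent E"
begin

lemma nu_E_add_le_max:
  assumes "x + y \<noteq> 0"
  shows "nu_E E (x + y) \<le> max (nu_E E x) (nu_E E y)"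
proof (rule nu_E_le_if_funpow_eq_zero[OF additive_zero[OF additive] nilpotent assms])
  let ?n = "Suc (max (nu_E E x) (nu_E E y))"
  have "(E ^^ ?n) x = 0" and "(E ^^ ?n) y = 0"
    by (rule funpow_eq_zero_if_nu_E_less[OF additive_zero[OF additive] nilpotent]; simp)+
  then show "(E ^^ ?n) (x + y) = 0"
    by (simp only: funpow_additive[OF additive] add_0)
qed

lemma nu_E_add_less:
  assumes "y \<noteq> 0" and "nu_E E x < nu_E E y"
  shows "nu_E E (x + y) = nu_E E y" and "(E ^^ nu_E E y) (x + y) = (E ^^ nu_E E y) y"
proof -
  note vanish = funpow_eq_zero_if_nu_E_less[OF additive_zero[OF additive] nilpotent]
  show leading: "(E ^^ nu_E E y) (x + y) = (E ^^ nu_E E y) y"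
    using assms(2) by (simp add: funpow_additive[OF additive] vanish)
  have "(E ^^ Suc (nu_E E y)) x = 0" and "(E ^^ Suc (nu_E E y)) y = 0"
    by (rule vanish; use assms(2) in simp)+
  then show "nu_E E (x + y) = nu_E E y"
    using leading funpow_nu_E_neq_zero[OF additive_zero[OF additive] nilpotent assms(1)]
    by (intro nu_E_eqI[of E, OF additive_zero[OF additive]])
      (simp_all add: funpow_additive[OF additive] del: funpow.simps)
qed

end

lemma max_Cons_same: "max (a # u) (a # v) = a # max u (v::'b::linorder list)"
  by (auto simp: max_def)

lemma string_map_add_le_max:
  fixes x y :: "'a::ab_group_add"
  assumes "\<forall>E \<in> set Es. (\<forall>x y. E (x + y) = E x + E y) \<and> locally_nilpotent E"
    and "x \<noteq> 0" and "y \<noteq> 0" and "x + y \<noteq> 0"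
  shows "string_map Es (x + y) \<le> max (string_map Es x) (string_map Es y)"
  using assms
proof (induction Es arbitrary: x y)
  case Nil
  then show ?case by simp
next
  case (Cons E Es)
  have additive: "\<forall>x y. E (x + y) = E x + E y" and nilpotent: "locally_nilpotent E"
    using Cons.prems(1) by auto
  note nu_less = nu_E_add_less[OF additive nilpotent]
  consider "nu_E E x < nu_E E y" | "nu_E E y < nu_E E x" | "nu_E E x = nu_E E y"
    by linarith
  then show ?case
  proof cases
    case 1
    then have "nu_E E (x + y) = nu_E E y" and "(E ^^ nu_E E y) (x + y) = (E ^^ nu_E E y) y"
      using nu_less[OF Cons.prems(3)] by auto
    then have "string_map (E # Es) (x + y) = string_map (E # Es) y"
      by (simp only: string_map.simps)
    then show ?thesis by (simp only: max.cobounded2)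
  next
    case 2
    then have "nu_E E (x + y) = nu_E E x" and "(E ^^ nu_E E x) (x + y) = (E ^^ nu_E E x) x"
      using nu_less[OF Cons.prems(2), of y] by (auto simp: add.commute)
    then have "string_map (E # Es) (x + y) = string_map (E # Es) x"
      by (simp only: string_map.simps)
    then show ?thesis by (simp only: max.cobounded1)
  next
    case 3
    define a where "a = nu_E E x"
    have "nu_E E (x + y) \<le> a"
      using nu_E_add_le_max[OF additive nilpotent Cons.prems(4)] 3 by (simp add: a_def)
    then consider "nu_E E (x + y) < a" | "nu_E E (x + y) = a" by linarith
    then show ?thesis
    proof cases
      case 1
      then have "string_map (E # Es) (x + y) < string_map (E # Es) x"
        by (simp add: a_def)
      then show ?thesis by (metis less_imp_le max.coboundedI1)
    next
      case 2
      have leading: "(E ^^ a) (x + y) = (E ^^ a) x + (E ^^ a) y"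
        by (rule funpow_additive[OF additive])
      note nonzero = funpow_nu_E_neq_zero[OF additive_zero[OF additive] nilpotent]
      have "string_map Es ((E ^^ a) x + (E ^^ a) y)
          \<le> max (string_map Es ((E ^^ a) x)) (string_map Es ((E ^^ a) y))"
        using Cons.IH Cons.prems(1) nonzero[OF Cons.prems(2)] nonzero[OF Cons.prems(3)]
          nonzero[OF Cons.prems(4)] 2 3 leading by (simp add: a_def)
      then show ?thesis
        using 2 3 leading by (simp add: a_def max_Cons_same)
    qed
  qed
qed

context
  fixes \<iota> :: "'k::field \<Rightarrow> 'a::ring_1"
  assumes alg: "k_algebra \<iota>"
begin

lemma k_algebra_one: "\<iota> 1 = 1"
  and k_algebra_add: "\<iota> (c + d) = \<iota> c + \<iota> d"
  and k_algebra_mult: "\<iota> (c * d) = \<iota> c * \<iota> d"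
  using alg unfolding k_algebra_def by blast+

lemma k_algebra_zero: "\<iota> 0 = 0"
  using k_algebra_add[of 0 0] by simp

lemma k_algebra_eq_zero_iff: "\<iota> c = 0 \<longleftrightarrow> c = 0"
proof
  assume "\<iota> c = 0"
  then have "\<iota> (c * inverse c) = 0"
    by (simp add: k_algebra_mult)
  then show "c = 0"
    using k_algebra_one by (metis right_inverse zero_neq_one)
qed (simp add: k_algebra_zero)

lemma k_algebra_left_commute: "\<iota> a * (\<iota> c * x) = \<iota> c * (\<iota> a * x)"
  by (metis k_algebra_mult mult.assoc mult.commute)

end

lemma k_linear_add: "k_linear \<iota> f \<Longrightarrow> f (x + y) = f x + f y"
  and k_linear_scale: "k_linear \<iota> f \<Longrightarrow> f (\<iota> c * x) = \<iota> c * f x"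
  unfolding k_linear_def by blast+

lemma k_linear_zero: "k_linear \<iota> f \<Longrightarrow> f 0 = 0"
  using k_linear_add[of \<iota> f 0 0] by simp

definition q_commute :: "('k \<Rightarrow> 'a::times) \<Rightarrow> 'k \<Rightarrow> ('a \<Rightarrow> 'a) \<Rightarrow> ('a \<Rightarrow> 'a) \<Rightarrow> bool" where
  "q_commute \<iota> c D f \<longleftrightarrow> (\<forall>x. D (f x) = \<iota> c * f (D x))"

context
  fixes \<iota> :: "'k::field \<Rightarrow> 'a::ring_1"
  assumes alg: "k_algebra \<iota>"
begin

lemma q_commute_funpow_left:
  assumes "q_commute \<iota> c D f" and "k_linear \<iota> D"
  shows "q_commute \<iota> (c ^ n) (D ^^ n) f"
  unfolding q_commute_def
proof (induction n)
  case (Suc n)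
  show ?case
  proof
    fix x
    have "(D ^^ Suc n) (f x) = \<iota> (c ^ n) * D (f ((D ^^ n) x))"
      using Suc k_linear_scale[OF assms(2)] by simp
    also have "\<dots> = \<iota> (c ^ Suc n) * f ((D ^^ Suc n) x)"
      using assms(1)
      by (simp add: q_commute_def k_algebra_mult[OF alg] k_algebra_left_commute[OF alg] mult.assoc)
    finally show "(D ^^ Suc n) (f x) = \<iota> (c ^ Suc n) * f ((D ^^ Suc n) x)" .
  qed
qed (simp add: k_algebra_one[OF alg])

lemma q_commute_funpow_right:
  assumes "q_commute \<iota> c D f" and "k_linear \<iota> f"
  shows "q_commute \<iota> (c ^ n) D (f ^^ n)"
  unfolding q_commute_def
proof (induction n)
  case (Suc n)
  show ?case
  proof
    fix x
    have "D ((f ^^ Suc n) x) = \<iota> c * f (\<iota> (c ^ n) * (f ^^ n) (D x))"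
      using Suc assms(1) by (simp add: q_commute_def)
    also have "\<dots> = \<iota> (c ^ Suc n) * (f ^^ Suc n) (D x)"
      by (simp add: k_linear_scale[OF assms(2)] k_algebra_mult[OF alg] mult.assoc)
    finally show "D ((f ^^ Suc n) x) = \<iota> (c ^ Suc n) * (f ^^ Suc n) (D x)" .
  qed
qed (simp add: k_algebra_one[OF alg])

lemma q_commute_scale:
  assumes "q_commute \<iota> c D f" and "k_linear \<iota> D"
  shows "q_commute \<iota> c D (\<lambda>x. \<iota> a * f x)"
  using assms unfolding q_commute_def
  by (simp add: k_linear_scale k_algebra_left_commute[OF alg])

end

lemma string_map_q_commute_invariant:
  fixes \<iota> :: "'k::field \<Rightarrow> 'a::ring_1_no_zero_divisors"
  assumes alg: "k_algebra \<iota>"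
    and g_zero: "\<forall>x. g x = 0 \<longleftrightarrow> x = 0"
    and commute: "\<forall>l\<in>set ls. k_linear \<iota> (d l) \<and> \<gamma> l \<noteq> 0 \<and> q_commute \<iota> (\<gamma> l) (d l) g"
  shows "string_map (map d ls) (g x) = string_map (map d ls) x"
  using g_zero commute
proof (induction ls arbitrary: g x)
  case Nil
  then show ?case by simp
next
  case (Cons l ls)
  have lin: "k_linear \<iota> (d l)" and "\<gamma> l \<noteq> 0" and "q_commute \<iota> (\<gamma> l) (d l) g"
    using Cons.prems(2) by auto
  then have iterate: "(d l ^^ n) (g y) = \<iota> (\<gamma> l ^ n) * g ((d l ^^ n) y)" for n y
    using q_commute_funpow_left[OF alg] unfolding q_commute_def by blast
  have scaled_zero: "\<iota> (\<gamma> l ^ n) * g y = 0 \<longleftrightarrow> y = 0" for n y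
    using \<open>\<gamma> l \<noteq> 0\<close> Cons.prems(1) by (simp add: k_algebra_eq_zero_iff[OF alg])
  have nu: "nu_E (d l) (g x) = nu_E (d l) x"
    unfolding nu_E_def iterate scaled_zero ..
  have "string_map (map d ls) (\<iota> (\<gamma> l ^ n) * g y) = string_map (map d ls) y" for n y
    using Cons.prems(2) scaled_zero q_commute_scale[OF alg]
    by (intro Cons.IH[where g = "\<lambda>y. \<iota> (\<gamma> l ^ n) * g y"]) auto
  then show ?case
    by (simp add: nu iterate del: funpow.simps)
qed

lemma string_map_scale:
  fixes \<iota> :: "'k::field \<Rightarrow> 'a::ring_1_no_zero_divisors"
  assumes alg: "k_algebra \<iota>" and "\<forall>l\<in>set ls. k_linear \<iota> (d l)" and "c \<noteq> 0"
  shows "string_map (map d ls) (\<iota> c * x) = string_map (map d ls) x"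
proof (rule string_map_q_commute_invariant[OF alg, where \<gamma> = "\<lambda>_. 1"])
  show "\<forall>x. \<iota> c * x = 0 \<longleftrightarrow> x = 0"
    using \<open>c \<noteq> 0\<close> by (simp add: k_algebra_eq_zero_iff[OF alg])
  show "\<forall>l\<in>set ls. k_linear \<iota> (d l) \<and> (1::'k) \<noteq> 0 \<and> q_commute \<iota> 1 (d l) ((*) (\<iota> c))"
    using assms(2) by (simp add: q_commute_def k_linear_scale k_algebra_one[OF alg])
qed

fun q_binomial :: "'k::field \<Rightarrow> nat \<Rightarrow> nat \<Rightarrow> 'k" where
  "q_binomial q 0 j = (if j = 0 then 1 else 0)"
| "q_binomial q (Suc n) j = q ^ j * q_binomial q n j + (if j = 0 then 0 else q_binomial q n (j - 1))"

definition q_pochhammer :: "'k::field \<Rightarrow> nat \<Rightarrow> 'k" where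
  "q_pochhammer q n = (\<Prod>t = 1..n. 1 - q ^ t)"

lemma q_binomial_eq_0: "n < j \<Longrightarrow> q_binomial q n j = 0"
  by (induction n arbitrary: j) auto

lemma q_binomial_0_right: "q_binomial q n 0 = 1"
  by (induction n) auto

lemma q_binomial_n_n: "q_binomial q n n = 1"
  by (induction n) (auto simp: q_binomial_eq_0)

lemma q_pochhammer_0: "q_pochhammer q 0 = 1"
  unfolding q_pochhammer_def by simp

lemma q_pochhammer_Suc: "q_pochhammer q (Suc n) = q_pochhammer q n * (1 - q ^ Suc n)"
  unfolding q_pochhammer_def by (simp add: prod.nat_ivl_Suc')

lemma q_pochhammer_neq_0:
  assumes "\<not> root_of_unity q"
  shows "q_pochhammer q n \<noteq> 0"
proof -
  have "q ^ t \<noteq> 1" if "t \<in> {1..n}" for t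
    using assms that unfolding root_of_unity_def
    by (metis atLeastAtMost_iff less_le_trans zero_less_one)
  then show ?thesis
    unfolding q_pochhammer_def by simp
qed

lemma q_binomial_mult_q_pochhammer:
  "j \<le> n \<Longrightarrow> q_binomial q n j * q_pochhammer q j * q_pochhammer q (n - j) = q_pochhammer q n"
proof (induction n arbitrary: j)
  case 0
  then show ?case by (simp add: q_pochhammer_0)
next
  case (Suc n)
  consider "j = 0" | "j = Suc n" | i where "j = Suc i" "i < n"
    using Suc.prems by (cases j) (auto simp: le_Suc_eq)
  then show ?case
  proof cases
    case 3
    have upper: "q_binomial q n (Suc i) * q_pochhammer q (Suc i) * q_pochhammer q (n - Suc i)
        = q_pochhammer q n"
      and lower: "q_binomial q n i * q_pochhammer q i * q_pochhammer q (n - i) = q_pochhammer q n"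
      using Suc.IH \<open>i < n\<close> by auto
    have diff_Suc: "n - i = Suc (n - Suc i)" and powers: "q ^ Suc i * q ^ (n - i) = q ^ Suc n"
      using \<open>i < n\<close> by (simp_all flip: power_add)
    have "q_binomial q (Suc n) j * q_pochhammer q j * q_pochhammer q (Suc n - j)
        = q ^ Suc i * (q_binomial q n (Suc i) * q_pochhammer q (Suc i) * q_pochhammer q (n - Suc i))
            * (1 - q ^ (n - i))
          + (q_binomial q n i * q_pochhammer q i * q_pochhammer q (n - i)) * (1 - q ^ Suc i)"
      unfolding \<open>j = Suc i\<close> by (simp add: diff_Suc q_pochhammer_Suc algebra_simps)
    also have "\<dots> = q_pochhammer q n * (1 - q ^ Suc i * q ^ (n - i))"
      unfolding upper lower by (simp add: algebra_simps)
    also have "\<dots> = q_pochhammer q (Suc n)"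
      unfolding powers q_pochhammer_Suc ..
    finally show ?thesis .
  qed (simp_all add: q_binomial_0_right q_binomial_n_n q_pochhammer_0 del: q_binomial.simps)
qed

lemma q_binomial_neq_0: "\<not> root_of_unity q \<Longrightarrow> j \<le> n \<Longrightarrow> q_binomial q n j \<noteq> 0"
  using q_binomial_mult_q_pochhammer[of j n q] q_pochhammer_neq_0[of q n] by auto

locale q_skew_derivation =
  fixes \<iota> :: "'k::field \<Rightarrow> 'a::ring_1" and \<phi> D :: "'a \<Rightarrow> 'a" and q :: 'k
  assumes alg: "k_algebra \<iota>"
    and \<phi>_linear: "k_linear \<iota> \<phi>"
    and skew: "skew_derivation \<iota> \<phi> D"
    and commute: "q_commute \<iota> q D \<phi>"
begin

lemma D_linear: "k_linear \<iota> D"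
  using skew unfolding skew_derivation_def by blast

lemma D_mult: "D (x * y) = D x * y + \<phi> x * D y"
  using skew unfolding skew_derivation_def by blast

lemma D_zero: "D 0 = 0"
  by (rule k_linear_zero[OF D_linear])

lemma D_funpow_\<phi>: "D ((\<phi> ^^ j) x) = \<iota> (q ^ j) * (\<phi> ^^ j) (D x)"
  using q_commute_funpow_right[OF alg commute \<phi>_linear] unfolding q_commute_def by blast

lemma funpow_\<phi>_zero: "(\<phi> ^^ j) 0 = 0"
  by (rule funpow_fixes_zero[of \<phi>, OF k_linear_zero[OF \<phi>_linear]])

lemma q_leibniz:
  "(D ^^ n) (a * b) = (\<Sum>j\<le>n. \<iota> (q_binomial q n j) * ((\<phi> ^^ j) ((D ^^ (n - j)) a) * (D ^^ j) b))"
proof (induction n)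
  case 0
  then show ?case by (simp add: k_algebra_one[OF alg])
next
  case (Suc n)
  define T where "T = (\<lambda>n j. (\<phi> ^^ j) ((D ^^ (n - j)) a) * (D ^^ j) b)"
  define C where "C = q_binomial q n"
  have D_sum: "D (sum f A) = (\<Sum>i\<in>A. D (f i))" for f :: "nat \<Rightarrow> 'a" and A
    using sum_comp_morphism[of D f A, OF D_zero k_linear_add[OF D_linear]] by (simp add: comp_def)
  have D_T: "D (T n j) = \<iota> (q ^ j) * T (Suc n) j + T (Suc n) (Suc j)" if "j \<le> n" for j
  proof -
    have "Suc n - j = Suc (n - j)" using that by simp
    then show ?thesis
      unfolding T_def D_mult D_funpow_\<phi> by (simp add: mult.assoc)
  qed
  have "(D ^^ Suc n) (a * b) = (\<Sum>j\<le>n. \<iota> (C j) * D (T n j))"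
    by (simp add: Suc T_def C_def D_sum k_linear_scale[OF D_linear])
  also have "\<dots> = (\<Sum>j\<le>n. \<iota> (q ^ j * C j) * T (Suc n) j) + (\<Sum>j\<le>n. \<iota> (C j) * T (Suc n) (Suc j))"
    by (simp add: D_T sum.distrib distrib_left k_algebra_mult[OF alg] mult.assoc mult.commute)
  also have "(\<Sum>j\<le>n. \<iota> (q ^ j * C j) * T (Suc n) j) = (\<Sum>j\<le>Suc n. \<iota> (q ^ j * C j) * T (Suc n) j)"
    by (simp add: C_def q_binomial_eq_0 k_algebra_zero[OF alg])
  also have "(\<Sum>j\<le>n. \<iota> (C j) * T (Suc n) (Suc j))
      = (\<Sum>j\<le>Suc n. \<iota> (if j = 0 then 0 else C (j - 1)) * T (Suc n) j)"
    by (subst sum.atMost_Suc_shift) (simp add: k_algebra_zero[OF alg])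
  finally show ?case
    unfolding T_def C_def by (simp add: sum.distrib[symmetric] k_algebra_add[OF alg] distrib_right)
qed

lemma q_leibniz_top:
  assumes a: "(D ^^ Suc r) a = 0" and b: "(D ^^ Suc s) b = 0"
  shows "(D ^^ (r + s)) (a * b) = \<iota> (q_binomial q (r + s) s) * ((\<phi> ^^ s) ((D ^^ r) a) * (D ^^ s) b)"
    and "(D ^^ Suc (r + s)) (a * b) = 0"
proof -
  define T where "T = (\<lambda>n j. \<iota> (q_binomial q n j) * ((\<phi> ^^ j) ((D ^^ (n - j)) a) * (D ^^ j) b))"
  have vanish: "T n j = 0" if "r < n - j \<or> s < j" for n j
  proof -
    have "(D ^^ (n - j)) a = 0 \<or> (D ^^ j) b = 0"
      using that funpow_eq_zero_mono[of D, OF D_zero a] funpow_eq_zero_mono[of D, OF D_zero b]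
      by (meson Suc_leI)
    then show ?thesis
      unfolding T_def by (auto simp: funpow_\<phi>_zero)
  qed
  have "(D ^^ (r + s)) (a * b) = (\<Sum>j\<le>r + s. T (r + s) j)"
    unfolding q_leibniz T_def ..
  also have "\<dots> = (\<Sum>j\<in>{s}. T (r + s) j)"
    by (rule sum.mono_neutral_right) (auto intro: vanish)
  finally show "(D ^^ (r + s)) (a * b) = \<iota> (q_binomial q (r + s) s) * ((\<phi> ^^ s) ((D ^^ r) a) * (D ^^ s) b)"
    by (simp add: T_def)
  have "(D ^^ Suc (r + s)) (a * b) = (\<Sum>j\<le>Suc (r + s). T (Suc (r + s)) j)"
    unfolding q_leibniz T_def ..
  also have "\<dots> = 0"
    by (rule sum.neutral) (auto intro: vanish)
  finally show "(D ^^ Suc (r + s)) (a * b) = 0" .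
qed

end

lemma nu_E_mult:
  fixes \<iota> :: "'k::field \<Rightarrow> 'a::ring_1_no_zero_divisors"
  assumes "q_skew_derivation \<iota> \<phi> D q" and "inj \<phi>" and "locally_nilpotent D"
    and "\<not> root_of_unity q" and "a \<noteq> 0" and "b \<noteq> 0"
  shows "nu_E D (a * b) = nu_E D a + nu_E D b"
    and "(D ^^ (nu_E D a + nu_E D b)) (a * b)
      = \<iota> (q_binomial q (nu_E D a + nu_E D b) (nu_E D b))
          * ((\<phi> ^^ nu_E D b) ((D ^^ nu_E D a) a) * (D ^^ nu_E D b) b)"
proof -
  interpret q_skew_derivation \<iota> \<phi> D q by fact
  define r where "r = nu_E D a"
  define s where "s = nu_E D b"
  have "(D ^^ Suc r) a = 0" and "(D ^^ Suc s) b = 0"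
    unfolding r_def s_def
    by (rule funpow_eq_zero_if_nu_E_less[OF D_zero \<open>locally_nilpotent D\<close>]; simp)+
  note top = q_leibniz_top[OF this]
  have "(\<phi> ^^ s) x = 0 \<longleftrightarrow> x = 0" for x
    by (rule funpow_eq_zero_iff_if_inj[OF \<open>inj \<phi>\<close> k_linear_zero[OF \<phi>_linear]])
  then have "(D ^^ (r + s)) (a * b) \<noteq> 0"
    unfolding top(1)
    using assms funpow_nu_E_neq_zero[OF D_zero \<open>locally_nilpotent D\<close>]
    by (simp add: r_def s_def k_algebra_eq_zero_iff[OF alg] q_binomial_neq_0)
  then show "nu_E D (a * b) = nu_E D a + nu_E D b"
    unfolding r_def s_def by (intro nu_E_eqI[of D, OF D_zero] top(2)[unfolded r_def s_def])
  show "(D ^^ (nu_E D a + nu_E D b)) (a * b)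
      = \<iota> (q_binomial q (nu_E D a + nu_E D b) (nu_E D b))
          * ((\<phi> ^^ nu_E D b) ((D ^^ nu_E D a) a) * (D ^^ nu_E D b) b)"
    using top(1) unfolding r_def s_def .
qed

lemma vec_add_Cons: "vec_add (r # u) (s # v) = (r + s) # vec_add u v"
  by (simp add: vec_add_def)

lemma string_map_mult:
  fixes \<iota> :: "'k::field \<Rightarrow> 'a::ring_1_no_zero_divisors" and ks :: "'i::linorder list"
  assumes alg: "k_algebra \<iota>"
    and "\<forall>k\<in>set ks. algebra_automorphism \<iota> (\<phi> k) \<and> skew_derivation \<iota> (\<phi> k) (d k)
           \<and> locally_nilpotent (d k) \<and> \<not> root_of_unity (q k k)"
    and "\<forall>k\<in>set ks. \<forall>l\<in>set ks. k \<le> l \<longrightarrow> q k l \<noteq> 0 \<and> q_commute \<iota> (q k l) (d l) (\<phi> k)"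
    and "sorted ks" and "a \<noteq> 0" and "b \<noteq> 0"
  shows "string_map (map d ks) (a * b) = vec_add (string_map (map d ks) a) (string_map (map d ks) b)"
  using assms(2-)
proof (induction ks arbitrary: a b)
  case Nil
  then show ?case by (simp add: vec_add_def)
next
  case (Cons k ks)
  have aut: "algebra_automorphism \<iota> (\<phi> k)" and skew: "skew_derivation \<iota> (\<phi> k) (d k)"
    and nilpotent: "locally_nilpotent (d k)" and nroot: "\<not> root_of_unity (q k k)"
    and commute: "q_commute \<iota> (q k k) (d k) (\<phi> k)"
    using Cons.prems(1,2) by simp_all
  have \<phi>_linear: "k_linear \<iota> (\<phi> k)" and "inj (\<phi> k)"
    using aut unfolding algebra_automorphism_def bij_def by auto
  have "q_skew_derivation \<iota> (\<phi> k) (d k) (q k k)"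
    using alg \<phi>_linear skew commute by unfold_locales
  note mult = nu_E_mult[OF this \<open>inj (\<phi> k)\<close> nilpotent nroot Cons.prems(4,5)]
  define r where "r = nu_E (d k) a"
  define s where "s = nu_E (d k) b"
  define C where "C = q_binomial (q k k) (r + s) s"
  define g where "g = (\<lambda>y. \<iota> C * (\<phi> k ^^ s) y)"
  have "C \<noteq> 0"
    unfolding C_def using q_binomial_neq_0[OF nroot] by simp
  have g_zero: "g y = 0 \<longleftrightarrow> y = 0" for y
    using \<open>C \<noteq> 0\<close> funpow_eq_zero_iff_if_inj[OF \<open>inj (\<phi> k)\<close> k_linear_zero[OF \<phi>_linear]]
    unfolding g_def by (simp add: k_algebra_eq_zero_iff[OF alg])
  have commutes:
    "\<forall>l\<in>set ks. k_linear \<iota> (d l) \<and> q k l ^ s \<noteq> 0 \<and> q_commute \<iota> (q k l ^ s) (d l) g"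
  proof
    fix l assume "l \<in> set ks"
    then have "k \<le> l" and "skew_derivation \<iota> (\<phi> l) (d l)"
      using Cons.prems(1,3) by simp_all
    then have lin: "k_linear \<iota> (d l)" and "q k l \<noteq> 0" and "q_commute \<iota> (q k l) (d l) (\<phi> k)"
      using Cons.prems(2) \<open>l \<in> set ks\<close> unfolding skew_derivation_def by simp_all
    then show "k_linear \<iota> (d l) \<and> q k l ^ s \<noteq> 0 \<and> q_commute \<iota> (q k l ^ s) (d l) g"
      unfolding g_def
      using q_commute_scale[OF alg q_commute_funpow_right[OF alg _ \<phi>_linear] lin] by simp
  qed
  have twist: "string_map (map d ks) (g y) = string_map (map d ks) y" for y
    by (rule string_map_q_commute_invariant[OF alg _ commutes]) (simp add: g_zero)
  have "d k 0 = 0"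
    using skew k_linear_zero unfolding skew_derivation_def by blast
  then have "(d k ^^ r) a \<noteq> 0" and "(d k ^^ s) b \<noteq> 0"
    unfolding r_def s_def
    using funpow_nu_E_neq_zero[of "d k", OF _ nilpotent] Cons.prems(4,5) by auto
  then have "string_map (map d ks) (g ((d k ^^ r) a) * (d k ^^ s) b)
      = vec_add (string_map (map d ks) ((d k ^^ r) a)) (string_map (map d ks) ((d k ^^ s) b))"
    using Cons.IH[of "g ((d k ^^ r) a)" "(d k ^^ s) b"] Cons.prems(1-3) g_zero twist by simp
  moreover have "(d k ^^ nu_E (d k) (a * b)) (a * b) = g ((d k ^^ r) a) * (d k ^^ s) b"
    using mult unfolding g_def C_def r_def s_def by (simp only: mult.assoc)
  ultimately show ?case
    using mult(1) by (simp add: vec_add_Cons r_def s_def del: funpow.simps)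
qed

theorem mainTheorem12:
  fixes \<iota> :: "'k::field \<Rightarrow> 'a::ring_1_no_zero_divisors"
    and m :: nat
    and \<phi> :: "nat \<Rightarrow> 'a \<Rightarrow> 'a"
    and d :: "nat \<Rightarrow> 'a \<Rightarrow> 'a"
    and q :: "nat \<Rightarrow> nat \<Rightarrow> 'k"
  assumes alg: "k_algebra \<iota>"
    and aut: "\<And>k. 1 \<le> k \<Longrightarrow> k \<le> m \<Longrightarrow> algebra_automorphism \<iota> (\<phi> k)"
    and skew: "\<And>k. 1 \<le> k \<Longrightarrow> k \<le> m \<Longrightarrow> skew_derivation \<iota> (\<phi> k) (d k)"
    and lnil: "\<And>k. 1 \<le> k \<Longrightarrow> k \<le> m \<Longrightarrow> locally_nilpotent (d k)"
    and qnz: "\<And>k l. 1 \<le> k \<Longrightarrow> k \<le> l \<Longrightarrow> l \<le> m \<Longrightarrow> q k l \<noteq> 0"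
    and comm: "\<And>k l x. 1 \<le> k \<Longrightarrow> k \<le> l \<Longrightarrow> l \<le> m \<Longrightarrow>
                 d l (\<phi> k x) = \<iota> (q k l) * \<phi> k (d l x)"
    and nroot: "\<And>k. 1 \<le> k \<Longrightarrow> k \<le> m \<Longrightarrow> \<not> root_of_unity (q k k)"
  defines "\<nu> \<equiv> string_map (map d [1..<m+1])"
  shows "(\<forall>c x. c \<noteq> 0 \<longrightarrow> x \<noteq> 0 \<longrightarrow> \<nu> (\<iota> c * x) = \<nu> x)
       \<and> (\<forall>x y. x \<noteq> 0 \<longrightarrow> y \<noteq> 0 \<longrightarrow> x + y \<noteq> 0 \<longrightarrow> \<nu> (x + y) \<le> max (\<nu> x) (\<nu> y))
       \<and> (\<forall>a b. a \<noteq> 0 \<longrightarrow> b \<noteq> 0 \<longrightarrow> \<nu> (a * b) = vec_add (\<nu> a) (\<nu> b))"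
proof -
  have indices: "k \<in> set [1..<m+1] \<longleftrightarrow> 1 \<le> k \<and> k \<le> m" for k
    by auto
  have linear: "\<forall>l\<in>set [1..<m+1]. k_linear \<iota> (d l)"
    using skew unfolding Ball_def indices skew_derivation_def by blast
  have single: "\<forall>k\<in>set [1..<m+1]. algebra_automorphism \<iota> (\<phi> k) \<and> skew_derivation \<iota> (\<phi> k) (d k)
      \<and> locally_nilpotent (d k) \<and> \<not> root_of_unity (q k k)"
    using aut skew lnil nroot unfolding Ball_def indices by blast
  have pairs: "\<forall>k\<in>set [1..<m+1]. \<forall>l\<in>set [1..<m+1].
      k \<le> l \<longrightarrow> q k l \<noteq> 0 \<and> q_commute \<iota> (q k l) (d l) (\<phi> k)"
    using qnz comm unfolding Ball_def indices q_commute_def by blast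
  have "\<nu> (\<iota> c * x) = \<nu> x" if "c \<noteq> 0" for c x
    unfolding \<nu>_def using string_map_scale[OF alg linear that] .
  moreover have "\<nu> (x + y) \<le> max (\<nu> x) (\<nu> y)" if "x \<noteq> 0" "y \<noteq> 0" "x + y \<noteq> 0" for x y
    unfolding \<nu>_def using linear lnil
    by (intro string_map_add_le_max[OF _ that]) (auto simp: k_linear_add)
  moreover have "\<nu> (a * b) = vec_add (\<nu> a) (\<nu> b)" if "a \<noteq> 0" "b \<noteq> 0" for a b
    unfolding \<nu>_def using string_map_mult[OF alg single pairs sorted_upt that] .
  ultimately show ?thesis
    by blast
qed

end
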